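(* $\mathfrak{L}(\mathrm{rtDVA}(2))\not\subseteq\bigcup_{k}\mathfrak{L}(\mathrm{rtD}k\mathrm{CA})$.
   Context: $\mathfrak{L}(A)$ denotes the class of languages recognized by machines of type $A$. A real-time deterministic vector automaton of dimension $k$ ($\mathrm{rtDVA}(k)$) is a 6-tuple $(Q,\Sigma,\delta,q_0,Q_a,v)$ with finite state set $Q$, initial state $q_0$, accept states $Q_a$, initial row vector $v\in\mathbb{Q}^k$ (freely chosen), and $\delta:Q\times(\Sigma\cup\{\cent,\$\})\times\{=,\neq\}\to Q\times S$, $S$ the set of $k\times k$ rational matrices. The input $w$ is read as $\cent w\$$ left to right, one symbol per step; in state $q$ reading $\sigma$, with $\omega$ equal to "$=$" iff the first vector entry equals $1$, if $\delta(q,\sigma,\omega)=(q',M)$ the machine goes to $q'$ and multiplies its row vector on the right by $M$. Acceptance: after processing $\$$, the state is in $Q_a$ and the first vector entry equals $1$. A real-time deterministic $k$-counter automaton (rtD$k$CA) is a 5-tuple $(Q,\Sigma,\delta,q_0,Q_a)$ with $k$ integer counters initially $0$, reading $\cent w\$$ one symbol per step; $\delta(q,\sigma,\theta)=(q',c)$ with $\theta\in\{0,\pm\}^k$ the zero/nonzero status of each counter and $c\in\{-1,0,1\}^k$ the counter increments; acceptance iff in an accept state after scanning $\$$. The union ranges over all $k\ge1$. *)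

theory Defs
  imports Complex_Main
begin

datatype 's tsym = Cent | Dollar | Sym 's

definition tape :: "'s list \<Rightarrow> 's tsym list" where
  "tape w = Cent # map Sym w @ [Dollar]"

definition tape_alphabet :: "'s set \<Rightarrow> 's tsym set" where
  "tape_alphabet \<Sigma> = Sym ` \<Sigma> \<union> {Cent, Dollar}"

text \<open>Row vectors in Q^k are functions nat => rat (only indices < k matter);
  k x k rational matrices are functions nat => nat => rat (only indices < k matter).
  The vector entry with index 0 is the "first entry".\<close>

definition vec_mat_mult :: "nat \<Rightarrow> (nat \<Rightarrow> rat) \<Rightarrow> (nat \<Rightarrow> nat \<Rightarrow> rat) \<Rightarrow> (nat \<Rightarrow> rat)" where
  "vec_mat_mult k v M = (\<lambda>j. \<Sum>i<k. v i * M i j)"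

definition dva_step ::
  "nat \<Rightarrow> (nat \<Rightarrow> 's tsym \<Rightarrow> bool \<Rightarrow> nat \<times> (nat \<Rightarrow> nat \<Rightarrow> rat)) \<Rightarrow>
   nat \<times> (nat \<Rightarrow> rat) \<Rightarrow> 's tsym \<Rightarrow> nat \<times> (nat \<Rightarrow> rat)" where
  "dva_step k \<delta> c \<sigma> =
     (let (q, v) = c; (q', M) = \<delta> q \<sigma> (v 0 = 1) in (q', vec_mat_mult k v M))"

definition rtDVA ::
  "nat \<Rightarrow> 's set \<Rightarrow> nat set \<Rightarrow> (nat \<Rightarrow> 's tsym \<Rightarrow> bool \<Rightarrow> nat \<times> (nat \<Rightarrow> nat \<Rightarrow> rat)) \<Rightarrow>
   nat \<Rightarrow> nat set \<Rightarrow> bool" where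
  "rtDVA k \<Sigma> Q \<delta> q0 Qa \<longleftrightarrow> finite Q \<and> q0 \<in> Q \<and> Qa \<subseteq> Q \<and>
     (\<forall>q\<in>Q. \<forall>\<sigma>\<in>tape_alphabet \<Sigma>. \<forall>\<omega>. fst (\<delta> q \<sigma> \<omega>) \<in> Q)"

definition dva_accepts ::
  "nat \<Rightarrow> (nat \<Rightarrow> 's tsym \<Rightarrow> bool \<Rightarrow> nat \<times> (nat \<Rightarrow> nat \<Rightarrow> rat)) \<Rightarrow>
   nat \<Rightarrow> nat set \<Rightarrow> (nat \<Rightarrow> rat) \<Rightarrow> 's list \<Rightarrow> bool" where
  "dva_accepts k \<delta> q0 Qa v w =
     (let (q, u) = foldl (dva_step k \<delta>) (q0, v) (tape w) in q \<in> Qa \<and> u 0 = 1)"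

definition rtDVA_langs :: "nat \<Rightarrow> 's set \<Rightarrow> 's list set set" where
  "rtDVA_langs k \<Sigma> = {L. \<exists>Q \<delta> q0 Qa v. rtDVA k \<Sigma> Q \<delta> q0 Qa \<and>
      L = {w \<in> lists \<Sigma>. dva_accepts k \<delta> q0 Qa v w}}"

text \<open>Counters are functions nat => int (only indices < k are counters).\<close>

definition ca_status :: "nat \<Rightarrow> (nat \<Rightarrow> int) \<Rightarrow> (nat \<Rightarrow> bool)" where
  "ca_status k c = (\<lambda>i. i < k \<and> c i \<noteq> 0)"

definition ca_step ::
  "nat \<Rightarrow> (nat \<Rightarrow> 's tsym \<Rightarrow> (nat \<Rightarrow> bool) \<Rightarrow> nat \<times> (nat \<Rightarrow> int)) \<Rightarrow>
   nat \<times> (nat \<Rightarrow> int) \<Rightarrow> 's tsym \<Rightarrow> nat \<times> (nat \<Rightarrow> int)" where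
  "ca_step k \<delta> s \<sigma> =
     (let (q, c) = s; (q', d) = \<delta> q \<sigma> (ca_status k c)
      in (q', \<lambda>i. if i < k then c i + d i else c i))"

definition rtDkCA ::
  "nat \<Rightarrow> 's set \<Rightarrow> nat set \<Rightarrow> (nat \<Rightarrow> 's tsym \<Rightarrow> (nat \<Rightarrow> bool) \<Rightarrow> nat \<times> (nat \<Rightarrow> int)) \<Rightarrow>
   nat \<Rightarrow> nat set \<Rightarrow> bool" where
  "rtDkCA k \<Sigma> Q \<delta> q0 Qa \<longleftrightarrow> finite Q \<and> q0 \<in> Q \<and> Qa \<subseteq> Q \<and>
     (\<forall>q\<in>Q. \<forall>\<sigma>\<in>tape_alphabet \<Sigma>. \<forall>\<theta>.
        fst (\<delta> q \<sigma> \<theta>) \<in> Q \<and> (\<forall>i<k. snd (\<delta> q \<sigma> \<theta>) i \<in> {-1, 0, 1}))"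

definition ca_accepts ::
  "nat \<Rightarrow> (nat \<Rightarrow> 's tsym \<Rightarrow> (nat \<Rightarrow> bool) \<Rightarrow> nat \<times> (nat \<Rightarrow> int)) \<Rightarrow>
   nat \<Rightarrow> nat set \<Rightarrow> 's list \<Rightarrow> bool" where
  "ca_accepts k \<delta> q0 Qa w = (fst (foldl (ca_step k \<delta>) (q0, \<lambda>_. 0) (tape w)) \<in> Qa)"

definition rtDkCA_langs :: "nat \<Rightarrow> 's set \<Rightarrow> 's list set set" where
  "rtDkCA_langs k \<Sigma> = {L. \<exists>Q \<delta> q0 Qa. rtDkCA k \<Sigma> Q \<delta> q0 Qa \<and>
      L = {w \<in> lists \<Sigma>. ca_accepts k \<delta> q0 Qa w}}"

end

theory Submission
  imports Defs "HOL-Real_Asymp.Real_Asymp"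
begin

text \<open>The witness is the language of marked binary palindromes \<open>u 2 u\<^sup>R\<close>. A vector
  automaton of dimension 2 keeps the row vector \<open>(x, 1)\<close>: while reading \<open>u\<close> it appends
  the bits of \<open>u\<close> to the binary numeral \<open>x\<close> (starting from \<open>x = 1\<close>), and after the marker
  it strips the bits it reads, so that it returns to \<open>x = 1\<close> exactly when the second half
  is \<open>u\<^sup>R\<close>. A counter automaton with \<open>k\<close> counters, on the other hand, has at most
  \<open>|Q| (2n+3)\<^sup>k\<close> configurations after reading \<open>n\<close> symbols, but the \<open>2\<^sup>n\<close> binary words
  of length \<open>n\<close> must all lead to distinct configurations.\<close>

definition push_bits :: "'a::semiring_1 \<Rightarrow> nat list \<Rightarrow> 'a" where
  "push_bits x u = foldl (\<lambda>x a. 2 * x + of_nat a) x u"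

definition pop_bits :: "'a::field \<Rightarrow> nat list \<Rightarrow> 'a" where
  "pop_bits x u = foldl (\<lambda>x a. (x - of_nat a) / 2) x u"

lemma push_bits_snoc: "push_bits x (u @ [a]) = 2 * push_bits x u + of_nat a"
  by (simp add: push_bits_def)

lemma of_nat_push_bits: "of_nat (push_bits x u) = push_bits (of_nat x) u"
  by (induction u rule: rev_induct) (simp_all add: push_bits_snoc push_bits_def)

lemma push_bits_one_pos: "push_bits (1::nat) u \<ge> 1"
  by (induction u rule: rev_induct) (simp_all add: push_bits_snoc push_bits_def)

lemma pop_bits_eq_iff:
  fixes x y :: "'a::field_char_0"
  shows "pop_bits x v = y \<longleftrightarrow> x = push_bits y (rev v)"
proof (induction v arbitrary: x)
  case Nil
  then show ?case by (simp add: pop_bits_def push_bits_def)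
next
  case (Cons a v)
  have "pop_bits x (a # v) = y \<longleftrightarrow> (x - of_nat a) / 2 = push_bits y (rev v)"
    using Cons.IH by (simp add: pop_bits_def)
  also have "\<dots> \<longleftrightarrow> x = push_bits y (rev (a # v))"
    by (auto simp: push_bits_snoc field_simps)
  finally show ?case .
qed

lemma push_bits_one_inj:
  assumes "set u \<subseteq> {0,1}" "set w \<subseteq> {0,1}" "push_bits (1::nat) u = push_bits 1 w"
  shows "u = w"
  using assms
proof (induction u arbitrary: w rule: rev_induct)
  case Nil
  then show ?case
    using push_bits_one_pos[of "butlast w"]
    by (cases w rule: rev_cases) (auto simp: push_bits_snoc push_bits_def)
next
  case (snoc a u)
  show ?case
  proof (cases w rule: rev_cases)
    case Nil
    then show ?thesis
      using snoc.prems push_bits_one_pos[of u] by (simp add: push_bits_snoc push_bits_def)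
  next
    case (snoc w' b)
    with snoc.prems have "a \<in> {0,1}" "b \<in> {0,1}" "set w' \<subseteq> {0,1}"
      and eq: "2 * push_bits 1 u + a = 2 * push_bits 1 w' + b"
      by (auto simp: push_bits_snoc)
    then have "a = b" and "push_bits (1::nat) u = push_bits 1 w'"
      by auto presburger+
    with snoc.IH snoc.prems \<open>set w' \<subseteq> {0,1}\<close> \<open>w = w' @ [b]\<close> show ?thesis
      by simp
  qed
qed

lemma pop_push_bits_eq_one_iff:
  assumes "set u \<subseteq> {0,1}" "set v \<subseteq> {0,1}"
  shows "pop_bits (push_bits (1::rat) u) v = 1 \<longleftrightarrow> v = rev u"
proof -
  have "push_bits (1::rat) w = of_nat (push_bits 1 w)" for w
    by (simp add: of_nat_push_bits)
  then have "pop_bits (push_bits (1::rat) u) v = 1 \<longleftrightarrow> push_bits (1::nat) u = push_bits 1 (rev v)"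
    by (simp add: pop_bits_eq_iff)
  also have "\<dots> \<longleftrightarrow> v = rev u"
    using push_bits_one_inj[of u "rev v"] assms by auto
  finally show ?thesis .
qed

definition marked_palindromes :: "nat list set" where
  "marked_palindromes = {u @ 2 # rev u | u. set u \<subseteq> {0,1}}"

lemma marked_palindromes_subset: "marked_palindromes \<subseteq> lists {0,1,2}"
  by (auto simp: marked_palindromes_def)

lemma append_marker_in_marked_palindromes_iff:
  assumes "set u \<subseteq> {0,1}"
  shows "u @ 2 # v \<in> marked_palindromes \<longleftrightarrow> v = rev u"
proof
  assume "u @ 2 # v \<in> marked_palindromes"
  then obtain u' where "set u' \<subseteq> {0,1}" "u' @ 2 # rev u' = u @ 2 # v"
    by (auto simp: marked_palindromes_def)
  then show "v = rev u"
    by (subst (asm) append_Cons_eq_iff) auto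
qed (use assms in \<open>auto simp: marked_palindromes_def\<close>)

lemma lists_marker_cases:
  assumes "w \<in> lists {0,1,2::nat}"
  obtains (no_marker) "set w \<subseteq> {0,1}"
  | (one_marker) u v where "w = u @ 2 # v" "set u \<subseteq> {0,1}" "set v \<subseteq> {0,1}"
  | (two_markers) u v z where "w = u @ 2 # v @ 2 # z" "set u \<subseteq> {0,1}" "set v \<subseteq> {0,1}"
proof -
  have bits: "set x \<subseteq> {0,1}" if "x \<in> lists {0,1,2}" "2 \<notin> set x" for x :: "nat list"
    using that by auto
  show thesis
  proof (cases "2 \<in> set w")
    case False
    with assms bits show thesis by (intro no_marker) auto
  next
    case True
    then obtain u v where w: "w = u @ 2 # v" "2 \<notin> set u"
      by (metis split_list_first)
    show thesis
    proof (cases "2 \<in> set v")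
      case False
      with assms w bits show thesis by (intro one_marker) auto
    next
      case True
      then obtain v' z where "v = v' @ 2 # z" "2 \<notin> set v'"
        by (metis split_list_first)
      with assms w bits show thesis by (intro two_markers) auto
    qed
  qed
qed

text \<open>The matrix \<open>[[\<alpha>, 0], [\<beta>, 1]]\<close>, which maps the row vector \<open>(x, 1)\<close> to \<open>(\<alpha> x + \<beta>, 1)\<close>.\<close>
definition affine_mat :: "rat \<Rightarrow> rat \<Rightarrow> nat \<Rightarrow> nat \<Rightarrow> rat" where
  "affine_mat \<alpha> \<beta> i j =
     (if i = 0 \<and> j = 0 then \<alpha> else if i = 1 \<and> j = 0 then \<beta> else if i = 1 \<and> j = 1 then 1 else 0)"

definition affine_row :: "rat \<Rightarrow> nat \<Rightarrow> rat" where
  "affine_row x j = (if j = 0 then x else if j = 1 then 1 else 0)"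

lemma affine_row_0 [simp]: "affine_row x 0 = x"
  by (simp add: affine_row_def)

lemma vec_mat_mult_affine:
  "vec_mat_mult 2 (affine_row x) (affine_mat \<alpha> \<beta>) = affine_row (\<alpha> * x + \<beta>)"
  by (auto simp: vec_mat_mult_def numeral_2_eq_2 affine_row_def affine_mat_def)

lemma dva_step_affine:
  assumes "\<delta> q \<sigma> (x = 1) = (q', affine_mat \<alpha> \<beta>)"
  shows "dva_step 2 \<delta> (q, affine_row x) \<sigma> = (q', affine_row (\<alpha> * x + \<beta>))"
  using assms by (simp add: dva_step_def affine_row_def vec_mat_mult_affine)

lemma dva_run_affine_loop:
  assumes "\<And>a \<omega>. a \<in> set u \<Longrightarrow> \<delta> q (Sym a) \<omega> = (q, affine_mat (\<alpha> a) (\<beta> a))"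
  shows "foldl (dva_step 2 \<delta>) (q, affine_row x) (map Sym u) =
           (q, affine_row (foldl (\<lambda>x a. \<alpha> a * x + \<beta> a) x u))"
  using assms by (induction u arbitrary: x) (simp_all add: dva_step_affine)

text \<open>State 0 reads the first half, state 1 the second half, state 2 is a sink.\<close>
definition palindrome_dva :: "nat \<Rightarrow> nat tsym \<Rightarrow> bool \<Rightarrow> nat \<times> (nat \<Rightarrow> nat \<Rightarrow> rat)" where
  "palindrome_dva q \<sigma> \<omega> = (case \<sigma> of
       Sym a \<Rightarrow>
         if q = 0 \<and> a \<le> 1 then (0, affine_mat 2 (of_nat a))
         else if q = 0 \<and> a = 2 then (1, affine_mat 1 0)
         else if q = 1 \<and> a \<le> 1 then (1, affine_mat (1/2) (- of_nat a / 2))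
         else (2, affine_mat 1 0)
     | _ \<Rightarrow> (q, affine_mat 1 0))"

lemma rtDVA_palindrome_dva: "rtDVA 2 {0,1,2} {0,1,2} palindrome_dva 0 {1}"
  by (auto simp: rtDVA_def palindrome_dva_def tape_alphabet_def split: tsym.splits)

lemma palindrome_dva_endmarker_step:
  "\<sigma> \<in> {Cent, Dollar} \<Longrightarrow> dva_step 2 palindrome_dva (q, affine_row x) \<sigma> = (q, affine_row x)"
  by (auto intro!: dva_step_affine[where \<alpha> = 1 and \<beta> = 0, simplified] simp: palindrome_dva_def)

lemma palindrome_dva_marker_step:
  "dva_step 2 palindrome_dva (0, affine_row x) (Sym 2) = (1, affine_row x)"
  "dva_step 2 palindrome_dva (1, affine_row x) (Sym 2) = (2, affine_row x)"
  by (auto intro!: dva_step_affine[where \<alpha> = 1 and \<beta> = 0, simplified] simp: palindrome_dva_def)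

lemma palindrome_dva_push_run:
  "set u \<subseteq> {0,1} \<Longrightarrow>
     foldl (dva_step 2 palindrome_dva) (0, affine_row x) (map Sym u) = (0, affine_row (push_bits x u))"
  by (subst dva_run_affine_loop[where \<alpha> = "\<lambda>_. 2" and \<beta> = of_nat])
     (auto simp: palindrome_dva_def push_bits_def)

lemma palindrome_dva_pop_run:
  assumes "set v \<subseteq> {0,1}"
  shows "foldl (dva_step 2 palindrome_dva) (1, affine_row x) (map Sym v) = (1, affine_row (pop_bits x v))"
proof -
  have "(\<lambda>x a. 1/2 * x + - of_nat a / 2) = (\<lambda>x a. (x - of_nat a) / 2 :: rat)"
    by (auto simp: field_simps)
  with assms show ?thesis
    by (subst dva_run_affine_loop[where \<alpha> = "\<lambda>_. 1/2" and \<beta> = "\<lambda>a. - of_nat a / 2"])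
       (auto simp: palindrome_dva_def pop_bits_def)
qed

lemma palindrome_dva_sink_run:
  "foldl (dva_step 2 palindrome_dva) (2, affine_row x) (map Sym z) = (2, affine_row x)"
proof -
  have "foldl (\<lambda>x a. 1 * x + 0) x z = x"
    by (induction z) simp_all
  then show ?thesis
    by (subst dva_run_affine_loop[where \<alpha> = "\<lambda>_. 1" and \<beta> = "\<lambda>_. 0"])
       (auto simp: palindrome_dva_def)
qed

lemma palindrome_dva_accepts_iff:
  assumes "w \<in> lists {0,1,2}"
  shows "dva_accepts 2 palindrome_dva 0 {1} (affine_row 1) w \<longleftrightarrow> w \<in> marked_palindromes"
  using assms
proof (cases rule: lists_marker_cases)
  case no_marker
  then have "w \<notin> marked_palindromes"
    by (auto simp: marked_palindromes_def)
  with no_marker show ?thesis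
    by (simp add: dva_accepts_def tape_def palindrome_dva_endmarker_step palindrome_dva_push_run)
next
  case (one_marker u v)
  \<comment> \<open>\<open>One_nat_def\<close> would rewrite state \<open>1\<close> to \<open>Suc 0\<close> and block the run lemmas.\<close>
  then show ?thesis
    by (simp add: dva_accepts_def tape_def palindrome_dva_endmarker_step palindrome_dva_marker_step
        palindrome_dva_push_run palindrome_dva_pop_run pop_push_bits_eq_one_iff
        append_marker_in_marked_palindromes_iff del: One_nat_def)
next
  case (two_markers u v z)
  have "2 \<notin> set (rev u)"
    using two_markers(2) by auto
  then have "v @ 2 # z \<noteq> rev u"
    by (metis in_set_conv_decomp)
  with two_markers show ?thesis
    by (simp add: dva_accepts_def tape_def palindrome_dva_endmarker_step palindrome_dva_marker_step
        palindrome_dva_push_run palindrome_dva_pop_run palindrome_dva_sink_run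
        append_marker_in_marked_palindromes_iff del: One_nat_def)
qed

lemma marked_palindromes_in_rtDVA_langs: "marked_palindromes \<in> rtDVA_langs 2 {0,1,2}"
  unfolding rtDVA_langs_def
  using rtDVA_palindrome_dva palindrome_dva_accepts_iff marked_palindromes_subset by blast

definition ca_configs :: "nat set \<Rightarrow> nat \<Rightarrow> nat \<Rightarrow> (nat \<times> (nat \<Rightarrow> int)) set" where
  "ca_configs Q k n = {(q, c). q \<in> Q \<and> (\<forall>i<k. \<bar>c i\<bar> \<le> int n) \<and> (\<forall>i\<ge>k. c i = 0)}"

lemma ca_configs_mono: "m \<le> n \<Longrightarrow> ca_configs Q k m \<subseteq> ca_configs Q k n"
  by (fastforce simp: ca_configs_def)

lemma ca_step_in_ca_configs:
  assumes A: "rtDkCA k \<Sigma> Q \<delta> q0 Qa" and "\<sigma> \<in> tape_alphabet \<Sigma>" "(q, c) \<in> ca_configs Q k n"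
  shows "ca_step k \<delta> (q, c) \<sigma> \<in> ca_configs Q k (Suc n)"
proof -
  obtain q' d where \<delta>: "\<delta> q \<sigma> (ca_status k c) = (q', d)"
    by fastforce
  have c: "q \<in> Q" "\<forall>i<k. \<bar>c i\<bar> \<le> int n" "\<forall>i\<ge>k. c i = 0"
    using assms(3) by (auto simp: ca_configs_def)
  then have "fst (\<delta> q \<sigma> (ca_status k c)) \<in> Q \<and> (\<forall>i<k. snd (\<delta> q \<sigma> (ca_status k c)) i \<in> {-1, 0, 1})"
    using A assms(2) unfolding rtDkCA_def by blast
  then have "q' \<in> Q" "\<forall>i<k. d i \<in> {-1, 0, 1}"
    by (simp_all add: \<delta>)
  moreover have "ca_step k \<delta> (q, c) \<sigma> = (q', \<lambda>i. if i < k then c i + d i else c i)"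
    by (simp add: ca_step_def \<delta>)
  ultimately show ?thesis
    using c by (force simp: ca_configs_def)
qed

lemma ca_run_in_ca_configs:
  assumes A: "rtDkCA k \<Sigma> Q \<delta> q0 Qa"
  shows "set xs \<subseteq> tape_alphabet \<Sigma> \<Longrightarrow> s \<in> ca_configs Q k n \<Longrightarrow>
           foldl (ca_step k \<delta>) s xs \<in> ca_configs Q k (n + length xs)"
proof (induction xs arbitrary: s n)
  case Nil
  then show ?case by simp
next
  case (Cons \<sigma> xs)
  obtain q c where "s = (q, c)"
    by fastforce
  with Cons.prems have "ca_step k \<delta> s \<sigma> \<in> ca_configs Q k (Suc n)"
    using ca_step_in_ca_configs[OF A] by simp
  with Cons.IH[of "ca_step k \<delta> s \<sigma>" "Suc n"] Cons.prems show ?case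
    by simp
qed

lemma ca_configs_subset_image:
  "ca_configs Q k n \<subseteq> (\<lambda>(q, xs). (q, \<lambda>i. if i < k then xs ! i else 0)) `
     (Q \<times> {xs. set xs \<subseteq> {-int n..int n} \<and> length xs = k})"
proof
  fix s assume "s \<in> ca_configs Q k n"
  then obtain q c where "s = (q, c)" "q \<in> Q" "\<forall>i<k. \<bar>c i\<bar> \<le> int n" "\<forall>i\<ge>k. c i = 0"
    by (auto simp: ca_configs_def)
  then show "s \<in> (\<lambda>(q, xs). (q, \<lambda>i. if i < k then xs ! i else 0)) `
      (Q \<times> {xs. set xs \<subseteq> {-int n..int n} \<and> length xs = k})"
    by (intro image_eqI[where x = "(q, map c [0..<k])"]) (auto simp: abs_le_iff)
qed

lemma card_ca_configs_le:
  assumes "finite Q"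
  shows "finite (ca_configs Q k n)" "card (ca_configs Q k n) \<le> card Q * (2 * n + 1) ^ k"
proof -
  let ?B = "Q \<times> {xs. set xs \<subseteq> {-int n..int n} \<and> length xs = k}"
  have "finite ?B"
    using assms by (simp add: finite_lists_length_eq)
  then show "finite (ca_configs Q k n)"
    by (rule finite_subset[OF ca_configs_subset_image finite_imageI])
  have "card (ca_configs Q k n) \<le> card ?B"
    using \<open>finite ?B\<close> ca_configs_subset_image
    by (meson card_image_le card_mono finite_imageI order_trans)
  also have "\<dots> = card Q * (2 * n + 1) ^ k"
    using card_lists_length_eq[OF finite_atLeastAtMost_int, of "- int n" "int n" k]
    by (simp add: card_cartesian_product nat_add_distrib nat_mult_distrib)
  finally show "card (ca_configs Q k n) \<le> card Q * (2 * n + 1) ^ k" .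
qed

lemma rtDkCA_fooling_set_card_le:
  assumes A: "rtDkCA k \<Sigma> Q \<delta> q0 Qa"
    and U: "U \<subseteq> lists \<Sigma>" "\<forall>u\<in>U. length u \<le> n"
    and fooling: "\<And>u u'. u \<in> U \<Longrightarrow> u' \<in> U \<Longrightarrow> u \<noteq> u' \<Longrightarrow>
       \<exists>z. ca_accepts k \<delta> q0 Qa (u @ z) \<noteq> ca_accepts k \<delta> q0 Qa (u' @ z)"
  shows "card U \<le> card Q * (2 * n + 3) ^ k"
proof -
  define config where "config u = foldl (ca_step k \<delta>) (q0, \<lambda>_. 0) (Cent # map Sym u)" for u
  have accepts: "ca_accepts k \<delta> q0 Qa (u @ z) \<longleftrightarrow>
      fst (foldl (ca_step k \<delta>) (config u) (map Sym z @ [Dollar])) \<in> Qa" for u z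
    by (simp add: ca_accepts_def tape_def config_def)
  have "inj_on config U"
    using fooling by (fastforce simp: inj_on_def accepts)
  moreover have "config ` U \<subseteq> ca_configs Q k (Suc n)"
  proof (rule image_subsetI)
    fix u assume "u \<in> U"
    have "(q0, \<lambda>_. 0) \<in> ca_configs Q k 0"
      using A by (simp add: rtDkCA_def ca_configs_def)
    moreover have "set (Cent # map Sym u) \<subseteq> tape_alphabet \<Sigma>"
      using \<open>u \<in> U\<close> U(1) by (auto simp: tape_alphabet_def)
    ultimately have "config u \<in> ca_configs Q k (Suc (length u))"
      using ca_run_in_ca_configs[OF A] by (fastforce simp: config_def)
    then show "config u \<in> ca_configs Q k (Suc n)"
      using ca_configs_mono \<open>u \<in> U\<close> U(2) by (meson Suc_le_mono subsetD)
  qed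
  moreover have "finite Q"
    using A by (simp add: rtDkCA_def)
  ultimately have "card U \<le> card (ca_configs Q k (Suc n))"
    by (intro card_inj_on_le) (auto intro: card_ca_configs_le)
  also have "\<dots> \<le> card Q * (2 * Suc n + 1) ^ k"
    using \<open>finite Q\<close> by (rule card_ca_configs_le(2))
  also have "2 * Suc n + 1 = 2 * n + 3"
    by simp
  finally show ?thesis .
qed

lemma ex_pow2_gt_poly: "\<exists>m. C * (2 * m + 3) ^ k < (2::nat) ^ m"
proof -
  have "((\<lambda>m::nat. real C * (2 * real m + 3) ^ k / 2 ^ m) \<longlongrightarrow> 0) at_top"
    by real_asymp
  then have "eventually (\<lambda>m. real C * (2 * real m + 3) ^ k / 2 ^ m < 1) at_top"
    by (rule order_tendstoD) simp
  then obtain m where "real C * (2 * real m + 3) ^ k / 2 ^ m < 1"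
    by (auto simp: eventually_at_top_linorder)
  then have "real (C * (2 * m + 3) ^ k) < real ((2::nat) ^ m)"
    by (simp add: field_simps)
  then show ?thesis
    by (intro exI[of _ m]) linarith
qed

lemma marked_palindromes_notin_rtDkCA_langs: "marked_palindromes \<notin> rtDkCA_langs k {0,1,2}"
proof
  assume "marked_palindromes \<in> rtDkCA_langs k {0,1,2}"
  then obtain Q \<delta> q0 Qa where A: "rtDkCA k {0,1,2} Q \<delta> q0 Qa"
    and L: "marked_palindromes = {w \<in> lists {0,1,2}. ca_accepts k \<delta> q0 Qa w}"
    by (auto simp: rtDkCA_langs_def)
  obtain m where m: "card Q * (2 * m + 3) ^ k < 2 ^ m"
    using ex_pow2_gt_poly by blast
  define U where "U = {u :: nat list. set u \<subseteq> {0,1} \<and> length u = m}"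
  have "card U \<le> card Q * (2 * m + 3) ^ k"
  proof (rule rtDkCA_fooling_set_card_le[OF A])
    show "U \<subseteq> lists {0,1,2}" "\<forall>u\<in>U. length u \<le> m"
      by (auto simp: U_def)
  next
    fix u u' assume "u \<in> U" "u' \<in> U" "u \<noteq> u'"
    then have "u @ 2 # rev u \<in> marked_palindromes" "u' @ 2 # rev u \<notin> marked_palindromes"
      by (auto simp: U_def append_marker_in_marked_palindromes_iff)
    moreover have "u @ 2 # rev u \<in> lists {0,1,2}" "u' @ 2 # rev u \<in> lists {0,1,2}"
      using \<open>u \<in> U\<close> \<open>u' \<in> U\<close> by (auto simp: U_def)
    ultimately show "\<exists>z. ca_accepts k \<delta> q0 Qa (u @ z) \<noteq> ca_accepts k \<delta> q0 Qa (u' @ z)"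
      unfolding L by blast
  qed
  moreover have "card U = 2 ^ m"
    by (simp add: U_def card_lists_length_eq numeral_2_eq_2)
  ultimately show False
    using m by simp
qed

theorem theorem6:
  shows "\<exists>(\<Sigma>::nat set) L. finite \<Sigma> \<and> L \<in> rtDVA_langs 2 \<Sigma> \<and>
           L \<notin> (\<Union>k\<in>{1..}. rtDkCA_langs k \<Sigma>)"
proof (intro exI conjI)
  show "finite {0::nat, 1, 2}"
    by simp
  show "marked_palindromes \<in> rtDVA_langs 2 {0, 1, 2}"
    by (rule marked_palindromes_in_rtDVA_langs)
  show "marked_palindromes \<notin> (\<Union>k\<in>{1..}. rtDkCA_langs k {0, 1, 2})"
    using marked_palindromes_notin_rtDkCA_langs by blast
qed

end
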